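(* Fix $\theta>0$. Let $\xi=\xi(n)$ be a positive real with $\xi\to\infty$ as $n\to\infty$. If $\sigma$ is drawn from the Ewens measure $\mathbb{P}_{\theta,n}$ on $\mathfrak{S}_n$, then $\mathbb{P}_{\theta,n}(\sigma\notin\mathcal{P}_\xi)=O(1/\xi)$.
   Context: For $\theta>0$, the Ewens measure on $\mathfrak{S}_n$ is $\mathbb{P}_{\theta,n}(\sigma=\sigma_0)=\theta^{K(\sigma_0)}/\theta^{(n)}$, where $K(\sigma_0)$ is the number of cycles of $\sigma_0$ and $\theta^{(n)}=\theta(\theta+1)\cdots(\theta+n-1)$. For $\sigma\in\mathfrak{S}_n$ let $c_k(\sigma)$ be the number of cycles of length $k$. $\mathcal{P}_\xi$ is the set of $\sigma\in\mathfrak{S}_n$ such that $c_k(\sigma)\le\xi$ for all $k\le\xi$ and $c_k(\sigma)\le 1$ for all $k>\xi$. *)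

theory Defs
  imports "HOL-Analysis.Analysis" "HOL-Combinatorics.Orbits" "HOL-Library.Landau_Symbols"
begin

definition cycles_of :: "nat \<Rightarrow> (nat \<Rightarrow> nat) \<Rightarrow> nat set set" where
  "cycles_of n \<sigma> = (\<lambda>x. orbit \<sigma> x) ` {1..n}"

definition num_cycles :: "nat \<Rightarrow> (nat \<Rightarrow> nat) \<Rightarrow> nat" where
  "num_cycles n \<sigma> = card (cycles_of n \<sigma>)"

definition cyc_count :: "nat \<Rightarrow> (nat \<Rightarrow> nat) \<Rightarrow> nat \<Rightarrow> nat" where
  "cyc_count n \<sigma> k = card {C \<in> cycles_of n \<sigma>. card C = k}"

definition ewens_prob :: "real \<Rightarrow> nat \<Rightarrow> (nat \<Rightarrow> nat) set \<Rightarrow> real" where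
  "ewens_prob \<theta> n A =
     (\<Sum>\<sigma> \<in> {\<sigma>. \<sigma> permutes {1..n}} \<inter> A. \<theta> ^ num_cycles n \<sigma>) / pochhammer \<theta> n"

definition P_xi :: "nat \<Rightarrow> real \<Rightarrow> (nat \<Rightarrow> nat) set" where
  "P_xi n \<xi> = {\<sigma>. \<sigma> permutes {1..n} \<and>
      (\<forall>k. real k \<le> \<xi> \<longrightarrow> real (cyc_count n \<sigma> k) \<le> \<xi>) \<and>
      (\<forall>k. real k > \<xi> \<longrightarrow> cyc_count n \<sigma> k \<le> 1)}"

end

theory Submission
  imports Defs
begin

text \<open>
  If \<open>\<sigma>\<close> is not in \<open>P_xi\<close>, some length \<open>k\<close> has \<open>c_k \<ge> 2\<close> and either \<open>k > \<xi>\<close> or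
  \<open>c_k > \<xi>\<close>. With the weights \<open>w_k = 1\<close> for \<open>k > \<xi>\<close> and \<open>w_k = 2/\<xi>^2\<close> otherwise this
  gives \<open>\<Sum>k. w_k c_k (c_k - 1) \<ge> 1\<close>, so by Markov's inequality the probability is at most
  \<open>\<Sum>k. w_k E[c_k (c_k - 1)]\<close>.

  The total Ewens weight of the permutations of an \<open>m\<close>-set is the rising factorial
  \<open>\<theta>^(m)\<close>, and a \<open>k\<close>-set carries \<open>(k - 1)!\<close> cyclic permutations. Cutting two prescribed
  disjoint \<open>k\<close>-cycles out of a permutation therefore gives
  \<open>E[c_k (c_k - 1)] \<le> (\<theta>/k)^2 q(n - 2k) / q(n)\<close> with \<open>q(m) = \<theta>^(m) / m!\<close>. Since \<open>m q(m)\<close>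
  increases, this is at most \<open>2 (\<theta>/k)^2\<close> for \<open>4k \<le> n\<close>, while
  \<open>\<Sum>r\<le>n. q(r) = q(n) (\<theta> + n) / \<theta>\<close> shows that the \<open>k\<close> with \<open>4k > n\<close> contribute
  \<open>O(1/n)\<close> altogether. Hence \<open>\<Sum>k>\<xi>. E[c_k (c_k - 1)] = O(1/\<xi>)\<close> and
  \<open>\<Sum>k. E[c_k (c_k - 1)] = O(1)\<close>, and the probability is \<open>O(1/\<xi>) + O(1/\<xi>^2)\<close>.
\<close>

definition perm_cycles :: "'a set \<Rightarrow> ('a \<Rightarrow> 'a) \<Rightarrow> 'a set set" where
  "perm_cycles S \<sigma> = orbit \<sigma> ` S"

lemma cycles_of_eq_perm_cycles: "cycles_of n \<sigma> = perm_cycles {1..n} \<sigma>"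
  by (simp add: cycles_of_def perm_cycles_def)

lemma permutes_self_in_orbit: "\<sigma> permutes S \<Longrightarrow> finite S \<Longrightarrow> x \<in> orbit \<sigma> x"
  by (metis permutation_permutes permutation_self_in_orbit)

lemma permutes_orbit_eq: "\<sigma> permutes S \<Longrightarrow> finite S \<Longrightarrow> y \<in> orbit \<sigma> x \<Longrightarrow> orbit \<sigma> y = orbit \<sigma> x"
  by (meson cyclic_on_orbit orbit_cyclic_eq3)

lemma finite_perm_cycles: "finite S \<Longrightarrow> finite (perm_cycles S \<sigma>)"
  by (simp add: perm_cycles_def)

lemma perm_cycles_subset: "\<sigma> permutes S \<Longrightarrow> C \<in> perm_cycles S \<sigma> \<Longrightarrow> C \<subseteq> S"
  using permutes_orbit_subset by (fastforce simp: perm_cycles_def)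

lemma perm_cycles_nonempty: "C \<in> perm_cycles S \<sigma> \<Longrightarrow> C \<noteq> {}"
  by (auto simp: perm_cycles_def orbit_nonempty)

lemma perm_cycles_disjoint:
  assumes "\<sigma> permutes S" "finite S" "C \<in> perm_cycles S \<sigma>" "D \<in> perm_cycles S \<sigma>" "C \<noteq> D"
  shows "C \<inter> D = {}"
proof -
  obtain c d where "C = orbit \<sigma> c" "D = orbit \<sigma> d"
    using assms(3,4) by (auto simp: perm_cycles_def)
  then show ?thesis using permutes_orbit_eq[OF assms(1,2)] assms(5) by blast
qed

lemma orbit_subset_closed: "f x \<in> A \<Longrightarrow> (\<And>y. y \<in> A \<Longrightarrow> f y \<in> A) \<Longrightarrow> orbit f x \<subseteq> A"
  by (auto elim: orbit.induct)

section \<open>Total Ewens weight and cyclic permutations\<close>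

lemma transpose_compose_apply:
  assumes q: "q permutes S" and x: "x \<notin> S" and b: "b \<in> S"
  shows "(Transposition.transpose x b \<circ> q) (inv q b) = x"
    and "(Transposition.transpose x b \<circ> q) x = b"
    and "s \<noteq> inv q b \<Longrightarrow> s \<noteq> x \<Longrightarrow> (Transposition.transpose x b \<circ> q) s = q s"
proof -
  have qc: "q (inv q b) = b" using q by (simp add: permutes_inverses(1))
  have qx: "q x = x" using q x by (simp add: permutes_not_in)
  show "(Transposition.transpose x b \<circ> q) (inv q b) = x" "(Transposition.transpose x b \<circ> q) x = b"
    by (simp_all add: qc qx)
  assume "s \<noteq> inv q b" "s \<noteq> x"
  then have "q s \<noteq> b" "q s \<noteq> x"
    using qc qx permutes_inj[OF q] by (metis injD)+
  then show "(Transposition.transpose x b \<circ> q) s = q s" by (simp add: transpose_def)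
qed

lemma orbit_transpose_compose_new:
  assumes S: "finite S" "x \<notin> S" and q: "q permutes S" and b: "b \<in> S"
  shows "orbit (Transposition.transpose x b \<circ> q) x = insert x (orbit q b)"
proof -
  define \<sigma> where "\<sigma> = Transposition.transpose x b \<circ> q"
  define c where "c = inv q b"
  note \<sigma>_apply = transpose_compose_apply[OF q S(2) b, folded \<sigma>_def c_def]
  have qc: "q c = b" using q by (simp add: c_def permutes_inverses(1))
  have orbit_b: "b \<in> orbit q b" "c \<in> orbit q b" "orbit q b \<subseteq> S"
    using permutes_self_in_orbit[OF q S(1)] permutes_orbit_eq[OF q S(1), of b c] qc
      permutes_orbit_subset[OF q b] by (auto intro: orbit.base)
  have "\<sigma> y \<in> insert x (orbit q b)" if "y \<in> insert x (orbit q b)" for y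
    using that \<sigma>_apply orbit_b orbit.step[of y q b] by (cases "y = c"; cases "y = x") auto
  then have "orbit \<sigma> x \<subseteq> insert x (orbit q b)"
    using \<sigma>_apply orbit_b by (intro orbit_subset_closed) auto
  moreover have "orbit q b \<subseteq> orbit \<sigma> x"
  proof
    have closed: "q w \<in> orbit \<sigma> x" if w: "w \<in> orbit \<sigma> x" "w \<in> S" for w
    proof (cases "w = c")
      case True
      then show ?thesis using qc \<sigma>_apply(2) orbit.base[of \<sigma> x] by simp
    next
      case False
      then have "\<sigma> w = q w" using \<sigma>_apply(3) w(2) S(2) by auto
      then show ?thesis using orbit.step[OF w(1)] by simp
    qed
    fix z assume "z \<in> orbit q b"
    then show "z \<in> orbit \<sigma> x"
    proof induct
      case base
      then show ?case using closed[of b] \<sigma>_apply(2) b orbit.base[of \<sigma> x] by simp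
    next
      case (step y)
      then show ?case using closed orbit_b(3) by blast
    qed
  qed
  moreover have "x \<in> orbit \<sigma> x"
    using calculation(2) orbit_b(2) orbit.step[of c \<sigma> x] \<sigma>_apply(1) by auto
  ultimately show ?thesis by (auto simp: \<sigma>_def)
qed

lemma orbit_transpose_compose_old:
  assumes S: "finite S" "x \<notin> S" and q: "q permutes S" and b: "b \<in> S"
    and y: "y \<in> S" "b \<notin> orbit q y"
  shows "orbit (Transposition.transpose x b \<circ> q) y = orbit q y"
proof (rule orbit_cong)
  show "y \<in> orbit q y" using permutes_self_in_orbit[OF q S(1)] .
  fix s assume s: "s \<in> orbit q y"
  then have "s \<in> S" using permutes_orbit_subset[OF q y(1)] by auto
  moreover have "q s \<noteq> b" using s y(2) orbit.step by metis
  then have "s \<noteq> inv q b" using q by (auto simp: permutes_inverses(1))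
  ultimately show "(Transposition.transpose x b \<circ> q) s = q s"
    using transpose_compose_apply(3)[OF q S(2) b] S(2) by auto
qed

lemma perm_cycles_transpose_compose:
  assumes S: "finite S" "x \<notin> S" and q: "q permutes S" and b: "b \<in> S"
  shows "perm_cycles (insert x S) (Transposition.transpose x b \<circ> q)
           = (\<lambda>C. if b \<in> C then insert x C else C) ` perm_cycles S q"
proof -
  define \<sigma> where "\<sigma> = Transposition.transpose x b \<circ> q"
  define g where "g C = (if b \<in> C then insert x C else C)" for C
  have \<sigma>: "\<sigma> permutes insert x S"
    unfolding \<sigma>_def using b by (intro permutes_compose permutes_subset[OF q] permutes_swap_id) auto
  have new: "orbit \<sigma> x = insert x (orbit q b)"
    unfolding \<sigma>_def by (rule orbit_transpose_compose_new[OF S q b])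
  have "orbit \<sigma> y = g (orbit q y)" if y: "y \<in> S" for y
  proof (cases "b \<in> orbit q y")
    case True
    then have "orbit q y = orbit q b" using permutes_orbit_eq[OF q S(1)] by metis
    moreover have "orbit \<sigma> y = orbit \<sigma> x"
      using permutes_orbit_eq[OF \<sigma>] S(1) new calculation permutes_self_in_orbit[OF q S(1), of y] by auto
    ultimately show ?thesis
      using permutes_orbit_eq[OF \<sigma>] new True S(1) by (simp add: g_def)
  next
    case False
    then show ?thesis
      using orbit_transpose_compose_old[OF S q b y False] by (simp add: g_def \<sigma>_def)
  qed
  moreover have "orbit \<sigma> x = g (orbit q b)" using new permutes_self_in_orbit[OF q S(1)] by (simp add: g_def)
  ultimately show ?thesis
    using b by (auto simp: perm_cycles_def \<sigma>_def g_def[abs_def])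
qed

lemma card_perm_cycles_transpose_compose:
  assumes S: "finite S" "x \<notin> S" and q: "q permutes S" and b: "b \<in> insert x S"
  shows "card (perm_cycles (insert x S) (Transposition.transpose x b \<circ> q))
           = card (perm_cycles S q) + (if b = x then 1 else 0)"
proof (cases "b = x")
  case True
  have "orbit q x = {x}" using q S by (simp add: orbit_eq_singleton_iff permutes_not_in)
  then have "perm_cycles (insert x S) q = insert {x} (perm_cycles S q)"
    by (simp add: perm_cycles_def)
  moreover have "{x} \<notin> perm_cycles S q" using perm_cycles_subset[OF q] S(2) by blast
  ultimately show ?thesis using True finite_perm_cycles[OF S(1)] by simp
next
  case False
  define g where "g = (\<lambda>C. if b \<in> C then insert x C else C)"
  have bS: "b \<in> S" using b False by simp
  have inj: "inj_on g (perm_cycles S q)"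
  proof (rule inj_onI)
    fix C D assume "C \<in> perm_cycles S q" "D \<in> perm_cycles S q" "g C = g D"
    then have "x \<notin> C" "x \<notin> D" using perm_cycles_subset[OF q] S(2) by blast+
    then have "g C - {x} = C" "g D - {x} = D" by (simp_all add: g_def)
    then show "C = D" using \<open>g C = g D\<close> by metis
  qed
  have "card (perm_cycles (insert x S) (Transposition.transpose x b \<circ> q)) = card (g ` perm_cycles S q)"
    by (simp only: perm_cycles_transpose_compose[OF S q bS] g_def)
  also have "\<dots> = card (perm_cycles S q)" by (rule card_image[OF inj])
  finally show ?thesis using False by simp
qed

text \<open>
  Each permutation of \<open>insert x S\<close> is \<open>transpose x b \<circ> q\<close> for unique \<open>b\<close> and \<open>q\<close>; the choice
  \<open>b = x\<close> adds the fixed point \<open>x\<close>, any other \<open>b\<close> puts \<open>x\<close> into the cycle of \<open>b\<close>.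
\<close>

lemma sum_permutes_insert_card_perm_cycles:
  fixes f :: "nat \<Rightarrow> 'b::comm_semiring_1"
  assumes S: "finite S" "x \<notin> S"
  shows "(\<Sum>\<sigma> | \<sigma> permutes insert x S. f (card (perm_cycles (insert x S) \<sigma>)))
           = (\<Sum>q | q permutes S. f (card (perm_cycles S q) + 1))
             + of_nat (card S) * (\<Sum>q | q permutes S. f (card (perm_cycles S q)))"
proof -
  have "(\<Sum>\<sigma> | \<sigma> permutes insert x S. f (card (perm_cycles (insert x S) \<sigma>)))
      = (\<Sum>b\<in>insert x S. \<Sum>q | q permutes S.
           f (card (perm_cycles S q) + (if b = x then 1 else 0)))"
    unfolding sum_over_permutations_insert[OF S]
    by (intro sum.cong refl) (simp add: card_perm_cycles_transpose_compose[OF S])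
  also have "\<dots> = (\<Sum>q | q permutes S. f (card (perm_cycles S q) + 1))
             + of_nat (card S) * (\<Sum>q | q permutes S. f (card (perm_cycles S q)))"
  proof -
    have "(\<Sum>b\<in>S. \<Sum>q | q permutes S. f (card (perm_cycles S q) + (if b = x then 1 else 0)))
        = (\<Sum>b\<in>S. \<Sum>q | q permutes S. f (card (perm_cycles S q)))"
      using S(2) by (intro sum.cong refl) auto
    then show ?thesis using S by (simp add: sum.insert)
  qed
  finally show ?thesis .
qed

lemma sum_permutes_power_card_perm_cycles:
  fixes \<theta> :: "'b::comm_semiring_1"
  assumes "finite S"
  shows "(\<Sum>\<sigma> | \<sigma> permutes S. \<theta> ^ card (perm_cycles S \<sigma>)) = pochhammer \<theta> (card S)"
  using assms
proof (induction rule: finite_induct)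
  case empty
  then show ?case by (simp add: perm_cycles_def)
next
  case (insert x S)
  then show ?case
    by (simp add: sum_permutes_insert_card_perm_cycles pochhammer_Suc algebra_simps
        flip: sum_distrib_left)
qed

lemma card_cyclic_permutes:
  assumes "finite A" "A \<noteq> {}"
  shows "card {\<sigma>. \<sigma> permutes A \<and> card (perm_cycles A \<sigma>) = 1} = fact (card A - 1)"
  using assms
proof (induction rule: finite_ne_induct)
  case (singleton a)
  have "{\<sigma>. \<sigma> permutes {a} \<and> card (perm_cycles {a} \<sigma>) = 1} = {id}"
    by (auto simp: perm_cycles_def)
  then show ?case by simp
next
  case (insert x A)
  have has_cycle: "card (perm_cycles A q) \<noteq> 0" for q
    using insert.hyps(1,2) by (simp add: perm_cycles_def)
  have "card {\<sigma>. \<sigma> permutes insert x A \<and> card (perm_cycles (insert x A) \<sigma>) = 1}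
      = (\<Sum>\<sigma> | \<sigma> permutes insert x A. if card (perm_cycles (insert x A) \<sigma>) = 1 then 1 else 0)"
    using insert.hyps(1) by (simp add: sum.If_cases finite_permutations Collect_conj_eq)
  also have "\<dots> = (\<Sum>q | q permutes A. if card (perm_cycles A q) + 1 = 1 then 1 else 0)
      + of_nat (card A) * (\<Sum>q | q permutes A. if card (perm_cycles A q) = 1 then 1 else 0)"
    by (rule sum_permutes_insert_card_perm_cycles[OF insert.hyps(1,3), of "\<lambda>m. if m = 1 then 1 else 0"])
  also have "\<dots> = card A * card {\<sigma>. \<sigma> permutes A \<and> card (perm_cycles A \<sigma>) = 1}"
    using insert.hyps(1) by (simp add: has_cycle sum.If_cases finite_permutations Collect_conj_eq)
  also have "\<dots> = fact (card (insert x A) - 1)"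
    using insert by (simp add: fact_reduce card_gt_0_iff)
  finally show ?case .
qed

section \<open>Removing cycles\<close>

lemma cyclic_on_perm_cycle:
  assumes "\<sigma> permutes S" "finite S" "A \<in> perm_cycles S \<sigma>"
  shows "cyclic_on \<sigma> A"
  using assms cyclic_on_orbit[OF assms(1,2)] by (auto simp: perm_cycles_def)

lemma
  assumes \<sigma>: "\<sigma> permutes S" "finite S" and A: "A \<in> perm_cycles S \<sigma>"
  shows perm_restrict_cycle_permutes: "perm_restrict \<sigma> A permutes A"
    and card_perm_cycles_perm_restrict_cycle: "card (perm_cycles A (perm_restrict \<sigma> A)) = 1"
proof -
  have cyclic: "cyclic_on \<sigma> A" using cyclic_on_perm_cycle[OF \<sigma> A] .
  have inj: "inj_on \<sigma> A" using permutes_inj_on[OF \<sigma>(1)] .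
  have "\<sigma> ` A = A"
    using cyclic_on_inI[OF cyclic] perm_cycles_subset[OF \<sigma>(1) A] \<sigma>(2)
    by (intro endo_inj_surj inj) (auto intro: finite_subset)
  then have "bij_betw \<sigma> A A" using inj by (simp add: bij_betw_def)
  then have "bij_betw (perm_restrict \<sigma> A) A A"
    by (rule bij_betw_cong[THEN iffD1, rotated]) (simp add: perm_restrict_simps)
  then show "perm_restrict \<sigma> A permutes A"
    by (rule bij_imp_permutes) (simp add: perm_restrict_simps)
  have "orbit (perm_restrict \<sigma> A) y = A" if "y \<in> A" for y
    using that cyclic orbit_cyclic_eq3 cyclic_on_perm_restrict by metis
  then have "perm_cycles A (perm_restrict \<sigma> A) = {A}"
    using perm_cycles_nonempty[OF A] by (auto simp: perm_cycles_def)
  then show "card (perm_cycles A (perm_restrict \<sigma> A)) = 1" by simp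
qed

lemma perm_cycles_perm_restrict_diff_cycle:
  assumes \<sigma>: "\<sigma> permutes S" "finite S" and A: "A \<in> perm_cycles S \<sigma>"
  shows "perm_cycles (S - A) (perm_restrict \<sigma> (S - A)) = perm_cycles S \<sigma> - {A}"
proof -
  obtain a where a: "A = orbit \<sigma> a" using A by (auto simp: perm_cycles_def)
  have \<rho>: "perm_restrict \<sigma> (S - A) permutes (S - A)"
    using perm_restrict_diff_cyclic[OF \<sigma>(1) cyclic_on_perm_cycle[OF \<sigma> A]] .
  have orbit_eq: "orbit (perm_restrict \<sigma> (S - A)) y = orbit \<sigma> y" if "y \<in> S - A" for y
    using that permutes_in_image[OF \<rho>] by (intro orbit_cong0[of y "S - A"]) (auto simp: perm_restrict_simps)
  have "y \<in> A \<longleftrightarrow> orbit \<sigma> y = A" if "y \<in> S" for y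
    using a permutes_orbit_eq[OF \<sigma>] permutes_self_in_orbit[OF \<sigma>] by metis
  then show ?thesis
    using A perm_cycles_subset[OF \<sigma>(1) A] orbit_eq by (auto simp: perm_cycles_def)
qed

lemma card_perm_cycles_perm_restrict_diff_cycle:
  assumes "\<sigma> permutes S" "finite S" "A \<in> perm_cycles S \<sigma>"
  shows "card (perm_cycles S \<sigma>) = card (perm_cycles (S - A) (perm_restrict \<sigma> (S - A))) + 1"
proof -
  have "card (perm_cycles S \<sigma>) > 0" using assms finite_perm_cycles card_gt_0_iff by blast
  then show ?thesis
    using assms finite_perm_cycles[OF assms(2)]
    by (simp add: perm_cycles_perm_restrict_diff_cycle card_Diff_singleton)
qed

lemma permutes_eq_perm_restrict_cases:
  assumes "\<sigma> permutes S"
  shows "\<sigma> = (\<lambda>x. if x \<in> A then perm_restrict \<sigma> A x else perm_restrict \<sigma> (S - A) x)"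
  using assms by (auto simp: fun_eq_iff perm_restrict_def permutes_not_in)

text \<open>
  Only the injectivity of \<open>\<sigma> \<mapsto> (\<sigma>|A, \<sigma>|(S - A))\<close> is used, hence an inequality.
\<close>

lemma sum_permutes_with_cycle_le:
  fixes \<theta> :: real
  assumes S: "finite S" "A \<subseteq> S" "A \<noteq> {}" and \<theta>: "\<theta> \<ge> 0"
  shows "(\<Sum>\<sigma> | \<sigma> permutes S \<and> A \<in> perm_cycles S \<sigma> \<and> P (perm_restrict \<sigma> (S - A)).
            \<theta> ^ card (perm_cycles S \<sigma>))
         \<le> \<theta> * fact (card A - 1)
            * (\<Sum>\<rho> | \<rho> permutes (S - A) \<and> P \<rho>. \<theta> ^ card (perm_cycles (S - A) \<rho>))"
proof -
  define X where "X = {\<sigma>. \<sigma> permutes S \<and> A \<in> perm_cycles S \<sigma> \<and> P (perm_restrict \<sigma> (S - A))}"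
  define Y1 where "Y1 = {\<tau>. \<tau> permutes A \<and> card (perm_cycles A \<tau>) = 1}"
  define Y2 where "Y2 = {\<rho>. \<rho> permutes (S - A) \<and> P \<rho>}"
  define h where "h \<sigma> = (perm_restrict \<sigma> A, perm_restrict \<sigma> (S - A))" for \<sigma> :: "'a \<Rightarrow> 'a"
  define G where "G p = \<theta> * \<theta> ^ card (perm_cycles (S - A) (snd p))" for p :: "('a \<Rightarrow> 'a) \<times> ('a \<Rightarrow> 'a)"
  have fA: "finite A" using S finite_subset by blast
  have inj: "inj_on h X"
  proof (rule inj_onI)
    fix \<sigma> \<sigma>' assume "\<sigma> \<in> X" "\<sigma>' \<in> X" "h \<sigma> = h \<sigma>'"
    then show "\<sigma> = \<sigma>'"
      using permutes_eq_perm_restrict_cases[of _ S A] by (simp add: X_def h_def) metis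
  qed
  have img: "h ` X \<subseteq> Y1 \<times> Y2"
    using perm_restrict_cycle_permutes[OF _ S(1)] card_perm_cycles_perm_restrict_cycle[OF _ S(1)]
      perm_restrict_diff_cyclic[OF _ cyclic_on_perm_cycle[OF _ S(1)]]
    by (auto simp: X_def Y1_def Y2_def h_def)
  have fin: "finite (Y1 \<times> Y2)"
    using finite_permutations[OF fA] finite_permutations[of "S - A"] S(1) by (auto simp: Y1_def Y2_def)
  have "(\<Sum>\<sigma>\<in>X. \<theta> ^ card (perm_cycles S \<sigma>)) = (\<Sum>\<sigma>\<in>X. G (h \<sigma>))"
    using card_perm_cycles_perm_restrict_diff_cycle[OF _ S(1)]
    by (intro sum.cong refl) (auto simp: X_def G_def h_def)
  also have "\<dots> = (\<Sum>p\<in>h ` X. G p)"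
    by (simp add: sum.reindex[OF inj])
  also have "\<dots> \<le> (\<Sum>p\<in>Y1 \<times> Y2. G p)"
    by (rule sum_mono2[OF fin img]) (simp add: G_def \<theta>)
  also have "\<dots> = (\<Sum>\<tau>\<in>Y1. \<Sum>\<rho>\<in>Y2. G (\<tau>, \<rho>))"
    by (simp add: sum.cartesian_product)
  also have "\<dots> = \<theta> * fact (card A - 1) * (\<Sum>\<rho>\<in>Y2. \<theta> ^ card (perm_cycles (S - A) \<rho>))"
    using card_cyclic_permutes[OF fA S(3)] by (simp add: G_def Y1_def sum_distrib_left mult_ac)
  finally show ?thesis by (simp add: X_def Y2_def)
qed

lemma sum_permutes_with_two_cycles_le:
  fixes \<theta> :: real
  assumes S: "finite S" "A \<subseteq> S" "B \<subseteq> S - A" "A \<noteq> {}" "B \<noteq> {}" and \<theta>: "\<theta> \<ge> 0"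
  shows "(\<Sum>\<sigma> | \<sigma> permutes S \<and> A \<in> perm_cycles S \<sigma> \<and> B \<in> perm_cycles S \<sigma>.
            \<theta> ^ card (perm_cycles S \<sigma>))
         \<le> \<theta> * fact (card A - 1) * (\<theta> * fact (card B - 1) * pochhammer \<theta> (card (S - A - B)))"
proof -
  have "A \<noteq> B" using S(3-5) by blast
  then have "(\<Sum>\<sigma> | \<sigma> permutes S \<and> A \<in> perm_cycles S \<sigma> \<and> B \<in> perm_cycles S \<sigma>.
              \<theta> ^ card (perm_cycles S \<sigma>))
      = (\<Sum>\<sigma> | \<sigma> permutes S \<and> A \<in> perm_cycles S \<sigma>
              \<and> B \<in> perm_cycles (S - A) (perm_restrict \<sigma> (S - A)). \<theta> ^ card (perm_cycles S \<sigma>))"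
    using perm_cycles_perm_restrict_diff_cycle[OF _ S(1)] by (intro sum.cong) auto
  also have "\<dots> \<le> \<theta> * fact (card A - 1)
      * (\<Sum>\<rho> | \<rho> permutes (S - A) \<and> B \<in> perm_cycles (S - A) \<rho>. \<theta> ^ card (perm_cycles (S - A) \<rho>))"
    by (rule sum_permutes_with_cycle_le[OF S(1,2,4) \<theta>])
  also have "\<dots> \<le> \<theta> * fact (card A - 1) * (\<theta> * fact (card B - 1) * pochhammer \<theta> (card (S - A - B)))"
  proof (rule mult_left_mono)
    show "(\<Sum>\<rho> | \<rho> permutes (S - A) \<and> B \<in> perm_cycles (S - A) \<rho>. \<theta> ^ card (perm_cycles (S - A) \<rho>))
        \<le> \<theta> * fact (card B - 1) * pochhammer \<theta> (card (S - A - B))"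
      using sum_permutes_with_cycle_le[OF _ S(3,5) \<theta>, of "\<lambda>_. True"] S(1)
      by (simp add: sum_permutes_power_card_perm_cycles)
  qed (simp add: \<theta>)
  finally show ?thesis .
qed

section \<open>The second factorial moment of a cycle count\<close>

definition perm_cycle_count :: "'a set \<Rightarrow> ('a \<Rightarrow> 'a) \<Rightarrow> nat \<Rightarrow> nat" where
  "perm_cycle_count S \<sigma> k = card {C \<in> perm_cycles S \<sigma>. card C = k}"

definition disjoint_subset_pairs :: "'a set \<Rightarrow> nat \<Rightarrow> ('a set \<times> 'a set) set" where
  "disjoint_subset_pairs S k = {(A, B). A \<subseteq> S \<and> B \<subseteq> S - A \<and> card A = k \<and> card B = k}"

lemma card_disjoint_subset_pairs:
  assumes "finite S"
  shows "card (disjoint_subset_pairs S k) = (card S choose k) * ((card S - k) choose k)"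
proof -
  have "disjoint_subset_pairs S k
      = Sigma {A. A \<subseteq> S \<and> card A = k} (\<lambda>A. {B. B \<subseteq> S - A \<and> card B = k})"
    by (auto simp: disjoint_subset_pairs_def)
  then have "card (disjoint_subset_pairs S k)
      = (\<Sum>A\<in>{A. A \<subseteq> S \<and> card A = k}. card {B. B \<subseteq> S - A \<and> card B = k})"
    using assms by (simp add: card_SigmaI)
  also have "\<dots> = (\<Sum>A\<in>{A. A \<subseteq> S \<and> card A = k}. (card S - k) choose k)"
    using assms by (intro sum.cong refl) (auto simp: n_subsets card_Diff_subset finite_subset)
  also have "\<dots> = (card S choose k) * ((card S - k) choose k)"
    using assms by (simp add: n_subsets)
  finally show ?thesis .
qed

lemma card_cycle_pairs:
  assumes \<sigma>: "\<sigma> permutes S" "finite S"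
  shows "card {(A, B) \<in> disjoint_subset_pairs S k. A \<in> perm_cycles S \<sigma> \<and> B \<in> perm_cycles S \<sigma>}
       = perm_cycle_count S \<sigma> k * (perm_cycle_count S \<sigma> k - 1)"
proof -
  define X where "X = {C \<in> perm_cycles S \<sigma>. card C = k}"
  have fX: "finite X" using finite_perm_cycles[OF \<sigma>(2)] by (simp add: X_def)
  have "{(A, B) \<in> disjoint_subset_pairs S k. A \<in> perm_cycles S \<sigma> \<and> B \<in> perm_cycles S \<sigma>}
      = X \<times> X - (\<lambda>C. (C, C)) ` X"
  proof (intro set_eqI iffI)
    fix p assume "p \<in> {(A, B) \<in> disjoint_subset_pairs S k. A \<in> perm_cycles S \<sigma> \<and> B \<in> perm_cycles S \<sigma>}"
    then obtain A B where p: "p = (A, B)" "B \<subseteq> S - A" "A \<in> X" "B \<in> X"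
      by (auto simp: disjoint_subset_pairs_def X_def)
    then have "A \<noteq> B" using perm_cycles_nonempty[of B S \<sigma>] by (auto simp: X_def)
    then show "p \<in> X \<times> X - (\<lambda>C. (C, C)) ` X" using p by auto
  next
    fix p assume "p \<in> X \<times> X - (\<lambda>C. (C, C)) ` X"
    then obtain A B where p: "p = (A, B)" "A \<in> X" "B \<in> X" "A \<noteq> B" by auto
    then have "A \<inter> B = {}" using perm_cycles_disjoint[OF \<sigma>] by (auto simp: X_def)
    then show "p \<in> {(A, B) \<in> disjoint_subset_pairs S k. A \<in> perm_cycles S \<sigma> \<and> B \<in> perm_cycles S \<sigma>}"
      using p perm_cycles_subset[OF \<sigma>(1)] by (auto simp: disjoint_subset_pairs_def X_def)
  qed
  moreover have "card (X \<times> X - (\<lambda>C. (C, C)) ` X) = card X * card X - card X"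
    using fX by (subst card_Diff_subset) (auto simp: card_image inj_on_def card_cartesian_product)
  ultimately show ?thesis by (simp add: perm_cycle_count_def X_def diff_mult_distrib2)
qed

lemma sum_permutes_cycle_count_pairs_le:
  fixes \<theta> :: real
  assumes S: "finite S" and \<theta>: "\<theta> \<ge> 0" and k: "k \<ge> 1"
  shows "(\<Sum>\<sigma> | \<sigma> permutes S. \<theta> ^ card (perm_cycles S \<sigma>)
            * real (perm_cycle_count S \<sigma> k * (perm_cycle_count S \<sigma> k - 1)))
         \<le> real ((card S choose k) * ((card S - k) choose k))
            * (\<theta> * fact (k - 1)) ^ 2 * pochhammer \<theta> (card S - 2 * k)"
proof -
  define PS where "PS = {\<sigma>. \<sigma> permutes S}"
  define R where "R \<sigma> p = (fst p \<in> perm_cycles S \<sigma> \<and> snd p \<in> perm_cycles S \<sigma>)" for \<sigma> p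
  define bound where "bound = (\<theta> * fact (k - 1)) ^ 2 * pochhammer \<theta> (card S - 2 * k)"
  have fin: "finite PS" "finite (disjoint_subset_pairs S k)"
    using S finite_subset[of "disjoint_subset_pairs S k" "Pow S \<times> Pow S"]
    by (auto simp: PS_def finite_permutations disjoint_subset_pairs_def)
  have "(\<Sum>\<sigma>\<in>PS. \<theta> ^ card (perm_cycles S \<sigma>)
            * real (perm_cycle_count S \<sigma> k * (perm_cycle_count S \<sigma> k - 1)))
      = (\<Sum>\<sigma>\<in>PS. \<Sum>p | p \<in> disjoint_subset_pairs S k \<and> R \<sigma> p. \<theta> ^ card (perm_cycles S \<sigma>))"
    using card_cycle_pairs[OF _ S]
    by (intro sum.cong refl) (simp add: PS_def R_def case_prod_beta' mult.commute)
  also have "\<dots> = (\<Sum>p\<in>disjoint_subset_pairs S k. \<Sum>\<sigma> | \<sigma> \<in> PS \<and> R \<sigma> p. \<theta> ^ card (perm_cycles S \<sigma>))"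
    by (rule sum.swap_restrict[OF fin])
  also have "\<dots> \<le> (\<Sum>p\<in>disjoint_subset_pairs S k. bound)"
  proof (rule sum_mono)
    fix p assume "p \<in> disjoint_subset_pairs S k"
    then obtain A B where p: "p = (A, B)" "A \<subseteq> S" "B \<subseteq> S - A" "card A = k" "card B = k"
      by (auto simp: disjoint_subset_pairs_def)
    then have ne: "A \<noteq> {}" "B \<noteq> {}" using k by auto
    have "card (S - A - B) = card S - 2 * k"
      using p S by (simp add: card_Diff_subset finite_subset Diff_Diff_Int)
    then show "(\<Sum>\<sigma> | \<sigma> \<in> PS \<and> R \<sigma> p. \<theta> ^ card (perm_cycles S \<sigma>)) \<le> bound"
      using sum_permutes_with_two_cycles_le[OF S p(2,3) ne \<theta>] p
      by (simp add: PS_def R_def bound_def power2_eq_square mult_ac)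
  qed
  also have "\<dots> = real ((card S choose k) * ((card S - k) choose k)) * bound"
    using card_disjoint_subset_pairs[OF S] by simp
  finally show ?thesis by (simp add: PS_def bound_def mult.assoc)
qed

section \<open>Estimates for the moment bound\<close>

definition rising_fact_quot :: "real \<Rightarrow> nat \<Rightarrow> real" where
  "rising_fact_quot \<theta> m = pochhammer \<theta> m / fact m"

lemma rising_fact_quot_pos: "\<theta> > 0 \<Longrightarrow> rising_fact_quot \<theta> m > 0"
  by (simp add: rising_fact_quot_def pochhammer_pos)

lemma mult_rising_fact_quot_mono:
  assumes "\<theta> > 0" "m \<le> n"
  shows "m * rising_fact_quot \<theta> m \<le> n * rising_fact_quot \<theta> n"
  using assms(2)
proof (induction n rule: dec_induct)
  case (step j)
  have "rising_fact_quot \<theta> (Suc j) = rising_fact_quot \<theta> j * (\<theta> + j) / Suc j"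
    by (simp add: rising_fact_quot_def pochhammer_Suc field_simps)
  then have "Suc j * rising_fact_quot \<theta> (Suc j) = (\<theta> + j) * rising_fact_quot \<theta> j"
    by simp
  also have "\<dots> \<ge> j * rising_fact_quot \<theta> j"
    using rising_fact_quot_pos[OF assms(1), of j] assms(1) by (simp add: mult_right_mono)
  finally show ?case using step.IH by simp
qed simp

lemma sum_rising_fact_quot:
  assumes "\<theta> > 0"
  shows "(\<Sum>r\<le>n. rising_fact_quot \<theta> r) = rising_fact_quot \<theta> n * (\<theta> + n) / \<theta>"
proof -
  have "rising_fact_quot \<theta> r = (\<theta> - 1 + r) gchoose r" for r
    by (simp add: rising_fact_quot_def gbinomial_pochhammer')
  then have "(\<Sum>r\<le>n. rising_fact_quot \<theta> r) = (\<theta> + n) gchoose n"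
    using gbinomial_parallel_sum[of "\<theta> - 1" n] by simp
  also have "\<dots> = pochhammer (\<theta> + 1) n / fact n"
    by (simp add: gbinomial_pochhammer')
  also have "pochhammer (\<theta> + 1) n = pochhammer \<theta> n * (\<theta> + n) / \<theta>"
    using pochhammer_rec[of \<theta> n] pochhammer_Suc[of \<theta> n] assms by (simp add: field_simps)
  finally show ?thesis by (simp add: rising_fact_quot_def)
qed

text \<open>
  The bound for \<open>E[c_k (c_k - 1)]\<close> under the Ewens measure on \<open>{1..n}\<close> that comes out of
  \<open>sum_permutes_cycle_count_pairs_le\<close>.
\<close>

definition cycle_pair_bound :: "real \<Rightarrow> nat \<Rightarrow> nat \<Rightarrow> real" where
  "cycle_pair_bound \<theta> n k = real ((n choose k) * ((n - k) choose k))
     * (\<theta> * fact (k - 1)) ^ 2 * pochhammer \<theta> (n - 2 * k) / pochhammer \<theta> n"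

lemma cycle_pair_bound_nonneg: "\<theta> > 0 \<Longrightarrow> cycle_pair_bound \<theta> n k \<ge> 0"
  by (simp add: cycle_pair_bound_def pochhammer_pos less_imp_le)

lemma cycle_pair_bound_eq_0: "n < 2 * k \<Longrightarrow> cycle_pair_bound \<theta> n k = 0"
  by (cases "n < k") (auto simp: cycle_pair_bound_def)

lemma cycle_pair_bound_eq:
  assumes "\<theta> > 0" "1 \<le> k" "2 * k \<le> n"
  shows "cycle_pair_bound \<theta> n k
           = (\<theta> / k) ^ 2 * (rising_fact_quot \<theta> (n - 2 * k) / rising_fact_quot \<theta> n)"
proof -
  have b1: "real (n choose k) = fact n / (fact k * fact (n - k))"
    using assms(3) by (simp add: binomial_fact)
  have "k \<le> n - k" using assms(3) by simp
  from binomial_fact[OF this]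
  have b2: "real ((n - k) choose k) = fact (n - k) / (fact k * fact (n - 2 * k))"
    by (simp add: mult_2)
  have fk: "(fact k :: real) = k * fact (k - 1)"
    using assms(2) by (simp add: fact_reduce)
  show ?thesis
    using assms(1,2) pochhammer_pos[OF assms(1)]
    unfolding cycle_pair_bound_def rising_fact_quot_def of_nat_mult b1 b2 fk
    by (simp add: field_simps power2_eq_square)
qed

lemma cycle_pair_bound_le_small:
  assumes \<theta>: "\<theta> > 0" and k: "1 \<le> k" "4 * k \<le> n"
  shows "cycle_pair_bound \<theta> n k \<le> 2 * (\<theta> / k) ^ 2"
proof -
  let ?q = "rising_fact_quot \<theta>"
  have "n \<le> 2 * (n - 2 * k)" using k by simp
  then have "real n \<le> 2 * real (n - 2 * k)" by linarith
  then have "real n * ?q (n - 2 * k) \<le> 2 * real (n - 2 * k) * ?q (n - 2 * k)"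
    using rising_fact_quot_pos[OF \<theta>, of "n - 2 * k"] by (intro mult_right_mono) auto
  also have "\<dots> \<le> 2 * (n * ?q n)"
    using mult_rising_fact_quot_mono[OF \<theta>, of "n - 2 * k" n] by (simp add: mult.assoc)
  finally have ratio: "?q (n - 2 * k) / ?q n \<le> 2"
    using k rising_fact_quot_pos[OF \<theta>, of n] by (simp add: field_simps)
  have "cycle_pair_bound \<theta> n k = (\<theta> / k) ^ 2 * (?q (n - 2 * k) / ?q n)"
    using cycle_pair_bound_eq[OF \<theta> k(1)] k(2) by simp
  also have "\<dots> \<le> (\<theta> / k) ^ 2 * 2"
    using ratio by (intro mult_left_mono) simp_all
  finally show ?thesis by simp
qed

lemma sum_cycle_pair_bound_large_le:
  assumes \<theta>: "\<theta> > 0"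
  shows "(\<Sum>k | k \<in> {1..n} \<and> n < 4 * k. cycle_pair_bound \<theta> n k) \<le> 16 * \<theta> * (\<theta> + n) / n ^ 2"
proof -
  let ?q = "rising_fact_quot \<theta>"
  define K where "K = {k \<in> {1..n}. n < 4 * k \<and> 2 * k \<le> n}"
  have q: "?q r > 0" for r using rising_fact_quot_pos[OF \<theta>] .
  have "(\<Sum>k | k \<in> {1..n} \<and> n < 4 * k. cycle_pair_bound \<theta> n k) = (\<Sum>k\<in>K. cycle_pair_bound \<theta> n k)"
    by (rule sum.mono_neutral_right) (auto simp: K_def not_le intro!: cycle_pair_bound_eq_0)
  also have "\<dots> \<le> (\<Sum>k\<in>K. 16 * \<theta> ^ 2 / n ^ 2 * (?q (n - 2 * k) / ?q n))"
  proof (rule sum_mono)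
    fix k assume "k \<in> K"
    then have k: "1 \<le> k" "2 * k \<le> n" "n < 4 * k" by (auto simp: K_def)
    have "real n \<le> 4 * real k" "real n > 0" "real k > 0" using k by linarith+
    then have "real n ^ 2 \<le> (4 * real k) ^ 2" by (intro power_mono) auto
    then have "16 * \<theta> ^ 2 / (4 * real k) ^ 2 \<le> 16 * \<theta> ^ 2 / n ^ 2"
      using \<open>real n > 0\<close> \<open>real k > 0\<close> by (intro divide_left_mono) auto
    then have "(\<theta> / k) ^ 2 \<le> 16 * \<theta> ^ 2 / n ^ 2"
      by (simp add: power_divide power_mult_distrib)
    then show "cycle_pair_bound \<theta> n k \<le> 16 * \<theta> ^ 2 / n ^ 2 * (?q (n - 2 * k) / ?q n)"
      unfolding cycle_pair_bound_eq[OF \<theta> k(1,2)] using q by (intro mult_right_mono) (auto intro: less_imp_le)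
  qed
  also have "\<dots> = 16 * \<theta> ^ 2 / n ^ 2 / ?q n * (\<Sum>k\<in>K. ?q (n - 2 * k))"
    by (simp add: sum_distrib_left)
  also have "\<dots> \<le> 16 * \<theta> ^ 2 / n ^ 2 / ?q n * (\<Sum>r\<le>n. ?q r)"
  proof (rule mult_left_mono)
    have "inj_on (\<lambda>k. n - 2 * k) K" by (rule inj_onI) (auto simp: K_def)
    then have "(\<Sum>k\<in>K. ?q (n - 2 * k)) = (\<Sum>r\<in>(\<lambda>k. n - 2 * k) ` K. ?q r)"
      by (simp add: sum.reindex)
    also have "\<dots> \<le> (\<Sum>r\<le>n. ?q r)"
      using q by (intro sum_mono2) (auto intro: less_imp_le)
    finally show "(\<Sum>k\<in>K. ?q (n - 2 * k)) \<le> (\<Sum>r\<le>n. ?q r)" .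
  qed (use q in \<open>simp add: less_imp_le\<close>)
  also have "\<dots> = 16 * \<theta> * (\<theta> + n) / n ^ 2"
    using q[of n] \<theta> by (cases "n = 0") (simp_all add: sum_rising_fact_quot field_simps power2_eq_square)
  finally show ?thesis .
qed

lemma sum_inverse_squares_greaterThan_le: "(\<Sum>k\<in>{m<..N}. 1 / real k ^ 2) \<le> 2 / (real m + 1)"
proof -
  have telescope: "(\<Sum>k\<in>{m<..N}. 1 / real k ^ 2) \<le> 2 / (real m + 1) - 2 / (real N + 1)"
    if "m \<le> N" for N
    using that
  proof (induction N rule: dec_induct)
    case (step N)
    have "1 / (real N + 1) \<le> 2 / (real N + 2)" by (simp add: divide_simps)
    then have "1 / (real N + 1) * (1 / (real N + 1)) \<le> 1 / (real N + 1) * (2 / (real N + 2))"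
      by (intro mult_left_mono) auto
    also have "\<dots> = 2 / (real N + 1) - 2 / (real (Suc N) + 1)"
      by (simp add: field_simps)
    finally have "1 / real (Suc N) ^ 2 \<le> 2 / (real N + 1) - 2 / (real (Suc N) + 1)"
      by (simp add: power2_eq_square add.commute)
    moreover have "{m<..Suc N} = insert (Suc N) {m<..N}" using step.hyps by auto
    ultimately show ?case using step.IH by simp
  qed simp
  show ?thesis
  proof (cases "m \<le> N")
    case True
    then show ?thesis using telescope[OF True] by (smt (verit) divide_nonneg_nonneg of_nat_0_le_iff)
  qed simp
qed

lemma sum_inverse_squares_gt_le:
  fixes \<xi> :: real
  assumes "\<xi> > 0"
  shows "(\<Sum>k | k \<in> {1..n} \<and> \<xi> < real k. 1 / real k ^ 2) \<le> 2 / \<xi>"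
proof -
  define m where "m = nat \<lfloor>\<xi>\<rfloor>"
  have m: "real m \<le> \<xi>" "\<xi> < real m + 1" using assms by (simp_all add: m_def)
  have "(\<Sum>k | k \<in> {1..n} \<and> \<xi> < real k. 1 / real k ^ 2) \<le> (\<Sum>k\<in>{m<..n}. 1 / real k ^ 2)"
    using m by (intro sum_mono2) auto
  also have "\<dots> \<le> 2 / (real m + 1)" by (rule sum_inverse_squares_greaterThan_le)
  also have "\<dots> \<le> 2 / \<xi>" using m assms by (simp add: frac_le)
  finally show ?thesis .
qed

lemma sum_cycle_pair_bound_small_tail_le:
  fixes \<xi> :: real
  assumes \<theta>: "\<theta> > 0" and \<xi>: "\<xi> > 0"
  shows "(\<Sum>k | k \<in> {1..n} \<and> \<xi> < real k \<and> 4 * k \<le> n. cycle_pair_bound \<theta> n k) \<le> 4 * \<theta> ^ 2 / \<xi>"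
proof -
  have "(\<Sum>k | k \<in> {1..n} \<and> \<xi> < real k \<and> 4 * k \<le> n. cycle_pair_bound \<theta> n k)
      \<le> (\<Sum>k | k \<in> {1..n} \<and> \<xi> < real k \<and> 4 * k \<le> n. 2 * \<theta> ^ 2 * (1 / real k ^ 2))"
    by (intro sum_mono) (auto simp: power_divide intro: order.trans[OF cycle_pair_bound_le_small[OF \<theta>]])
  also have "\<dots> \<le> 2 * \<theta> ^ 2 * (\<Sum>k | k \<in> {1..n} \<and> \<xi> < real k. 1 / real k ^ 2)"
    unfolding sum_distrib_left[symmetric] by (intro mult_left_mono sum_mono2) auto
  also have "\<dots> \<le> 2 * \<theta> ^ 2 * (2 / \<xi>)"
    by (intro mult_left_mono sum_inverse_squares_gt_le \<xi>) simp
  finally show ?thesis by simp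
qed

lemma sum_cycle_pair_bound_large_tail_le:
  fixes \<xi> :: real
  assumes \<theta>: "\<theta> > 0" and \<xi>: "\<xi> > 0"
  shows "(\<Sum>k | k \<in> {1..n} \<and> \<xi> < real k \<and> n < 4 * k. cycle_pair_bound \<theta> n k)
           \<le> 8 * \<theta> * (\<theta> + 1) / \<xi>"
proof (cases "real n \<le> 2 * \<xi>")
  case True
  then have "(\<Sum>k | k \<in> {1..n} \<and> \<xi> < real k \<and> n < 4 * k. cycle_pair_bound \<theta> n k) = 0"
    by (intro sum.neutral ballI cycle_pair_bound_eq_0) auto
  then show ?thesis using \<theta> \<xi> by simp
next
  case False
  then have n: "real n \<ge> 1" "2 * \<xi> < real n" using \<xi> by auto
  have "(\<Sum>k | k \<in> {1..n} \<and> \<xi> < real k \<and> n < 4 * k. cycle_pair_bound \<theta> n k)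
      \<le> (\<Sum>k | k \<in> {1..n} \<and> n < 4 * k. cycle_pair_bound \<theta> n k)"
    by (intro sum_mono2) (auto simp: cycle_pair_bound_nonneg[OF \<theta>])
  also have "\<dots> \<le> 16 * \<theta> * (\<theta> + n) / n ^ 2"
    by (rule sum_cycle_pair_bound_large_le[OF \<theta>])
  also have "\<dots> = 16 * \<theta> * (\<theta> / n + 1) / n"
    using n by (simp add: field_simps power2_eq_square)
  also have "\<dots> \<le> 16 * \<theta> * (\<theta> + 1) / (2 * \<xi>)"
    using n \<theta> \<xi> by (intro frac_le mult_left_mono add_right_mono) (auto simp: field_simps)
  finally show ?thesis by simp
qed

lemma sum_cycle_pair_bound_tail_le:
  fixes \<xi> :: real
  assumes \<theta>: "\<theta> > 0" and \<xi>: "\<xi> > 0"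
  shows "(\<Sum>k | k \<in> {1..n} \<and> \<xi> < real k. cycle_pair_bound \<theta> n k)
           \<le> (4 * \<theta> ^ 2 + 8 * \<theta> * (\<theta> + 1)) / \<xi>"
proof -
  have "(\<Sum>k | k \<in> {1..n} \<and> \<xi> < real k. cycle_pair_bound \<theta> n k)
      = (\<Sum>k | k \<in> {1..n} \<and> \<xi> < real k \<and> 4 * k \<le> n. cycle_pair_bound \<theta> n k)
        + (\<Sum>k | k \<in> {1..n} \<and> \<xi> < real k \<and> n < 4 * k. cycle_pair_bound \<theta> n k)"
    by (subst sum.union_disjoint[symmetric]) (auto intro!: sum.cong)
  also have "\<dots> \<le> 4 * \<theta> ^ 2 / \<xi> + 8 * \<theta> * (\<theta> + 1) / \<xi>"
    by (intro add_mono sum_cycle_pair_bound_small_tail_le sum_cycle_pair_bound_large_tail_le \<theta> \<xi>)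
  finally show ?thesis by (simp add: add_divide_distrib)
qed
lemma sum_cycle_pair_bound_le:
  assumes "\<theta> > 0"
  shows "(\<Sum>k\<in>{1..n}. cycle_pair_bound \<theta> n k) \<le> 2 * (4 * \<theta> ^ 2 + 8 * \<theta> * (\<theta> + 1))"
proof -
  have "{k. k \<in> {1..n} \<and> 1 / 2 < real k} = {1..n}" by auto
  then show ?thesis using sum_cycle_pair_bound_tail_le[OF assms, of "1 / 2" n] by simp
qed

section \<open>Permutations outside \<open>P_xi\<close>\<close>

definition bad_cycle_weight :: "real \<Rightarrow> nat \<Rightarrow> real" where
  "bad_cycle_weight \<xi> k = (if \<xi> < real k then 1 else 2 / \<xi> ^ 2)"

lemma one_le_bad_cycle_weight:
  assumes \<xi>: "\<xi> \<ge> 2" and c: "c \<ge> 2" "\<xi> < real k \<or> \<xi> < real c"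
  shows "1 \<le> bad_cycle_weight \<xi> k * real (c * (c - 1))"
proof -
  have c_real: "real (c * (c - 1)) = real c * (real c - 1)" "real c \<ge> 2"
    using c(1) by (simp_all add: of_nat_diff)
  show ?thesis
  proof (cases "\<xi> < real k")
    case True
    have "1 * 1 \<le> real c * (real c - 1)" using c_real(2) by (intro mult_mono) auto
    then show ?thesis unfolding c_real(1) using True by (simp add: bad_cycle_weight_def)
  next
    case False
    then have "\<xi> < real c" using c(2) by simp
    then have "\<xi> * (\<xi> / 2) \<le> real c * (real c - 1)" using \<xi> by (intro mult_mono) auto
    then have "1 \<le> 2 / \<xi> ^ 2 * (real c * (real c - 1))"
      using \<xi> by (simp add: field_simps power2_eq_square)
    then show ?thesis unfolding c_real(1) using False by (simp add: bad_cycle_weight_def)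
  qed
qed

lemma cyc_count_eq_perm_cycle_count: "cyc_count n \<sigma> k = perm_cycle_count {1..n} \<sigma> k"
  by (simp add: cyc_count_def perm_cycle_count_def cycles_of_eq_perm_cycles)

lemma not_in_P_xi_imp_bad_cycle_count:
  assumes \<sigma>: "\<sigma> permutes {1..n}" "\<sigma> \<notin> P_xi n \<xi>" and \<xi>: "\<xi> \<ge> 1"
  obtains k where "k \<in> {1..n}" "perm_cycle_count {1..n} \<sigma> k \<ge> 2"
    "\<xi> < real k \<or> \<xi> < real (perm_cycle_count {1..n} \<sigma> k)"
proof -
  let ?c = "perm_cycle_count {1..n} \<sigma>"
  obtain k where k: "(real k \<le> \<xi> \<and> \<xi> < real (?c k)) \<or> (\<xi> < real k \<and> ?c k > 1)"
    using \<sigma> by (auto simp: P_xi_def not_le cyc_count_eq_perm_cycle_count)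
  then have c: "?c k \<ge> 2" using \<xi> by auto
  then obtain C where C: "C \<in> perm_cycles {1..n} \<sigma>" "card C = k"
    by (metis (mono_tags, lifting) Collect_empty_eq card.empty not_numeral_le_zero perm_cycle_count_def)
  have "C \<subseteq> {1..n}" "C \<noteq> {}"
    using perm_cycles_subset[OF \<sigma>(1) C(1)] perm_cycles_nonempty[OF C(1)] .
  then have "1 \<le> k" "k \<le> n"
    using C(2) card_mono[of "{1..n}" C] finite_subset[of C "{1..n}"] by (auto simp: Suc_le_eq)
  then show ?thesis
  proof (intro that)
    show "\<xi> < real k \<or> \<xi> < real (?c k)" using k by blast
  qed (use c in auto)
qed

lemma sum_bad_cycle_weight_cycle_pair_bound_le:
  assumes \<theta>: "\<theta> > 0" and \<xi>: "\<xi> \<ge> 2"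
  shows "(\<Sum>k\<in>{1..n}. bad_cycle_weight \<xi> k * cycle_pair_bound \<theta> n k)
           \<le> 3 * (4 * \<theta> ^ 2 + 8 * \<theta> * (\<theta> + 1)) / \<xi>"
proof -
  define C where "C = 4 * \<theta> ^ 2 + 8 * \<theta> * (\<theta> + 1)"
  have split: "{1..n} \<inter> {k. \<xi> < real k} = {k \<in> {1..n}. \<xi> < real k}"
    "{1..n} \<inter> - {k. \<xi> < real k} = {k \<in> {1..n}. \<not> \<xi> < real k}" by auto
  have "(\<Sum>k\<in>{1..n}. bad_cycle_weight \<xi> k * cycle_pair_bound \<theta> n k)
      = (\<Sum>k\<in>{1..n}. if \<xi> < real k then cycle_pair_bound \<theta> n k else 2 / \<xi> ^ 2 * cycle_pair_bound \<theta> n k)"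
    by (intro sum.cong) (simp_all add: bad_cycle_weight_def)
  also have "\<dots> = (\<Sum>k | k \<in> {1..n} \<and> \<xi> < real k. cycle_pair_bound \<theta> n k)
        + 2 / \<xi> ^ 2 * (\<Sum>k | k \<in> {1..n} \<and> \<not> \<xi> < real k. cycle_pair_bound \<theta> n k)"
    unfolding sum.If_cases[OF finite_atLeastAtMost] split by (simp add: sum_distrib_left)
  also have "\<dots> \<le> C / \<xi> + 2 / \<xi> ^ 2 * (2 * C)"
  proof (intro add_mono mult_left_mono)
    show "(\<Sum>k | k \<in> {1..n} \<and> \<xi> < real k. cycle_pair_bound \<theta> n k) \<le> C / \<xi>"
      using sum_cycle_pair_bound_tail_le[OF \<theta>] \<xi> by (simp add: C_def)
    have "(\<Sum>k | k \<in> {1..n} \<and> \<not> \<xi> < real k. cycle_pair_bound \<theta> n k)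
        \<le> (\<Sum>k\<in>{1..n}. cycle_pair_bound \<theta> n k)"
      by (intro sum_mono2) (auto simp: cycle_pair_bound_nonneg[OF \<theta>])
    then show "(\<Sum>k | k \<in> {1..n} \<and> \<not> \<xi> < real k. cycle_pair_bound \<theta> n k) \<le> 2 * C"
      using sum_cycle_pair_bound_le[OF \<theta>, of n] by (simp add: C_def)
  qed simp
  also have "\<dots> \<le> C / \<xi> + 1 / \<xi> * (2 * C)"
  proof -
    have "2 / \<xi> ^ 2 \<le> 1 / \<xi>" using \<xi> by (simp add: field_simps power2_eq_square)
    moreover have "C \<ge> 0" using \<theta> by (simp add: C_def)
    ultimately have "2 / \<xi> ^ 2 * (2 * C) \<le> 1 / \<xi> * (2 * C)" by (intro mult_right_mono) auto
    then show ?thesis by (rule add_left_mono)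
  qed
  also have "\<dots> = 3 * C / \<xi>" by (simp add: field_simps)
  finally show ?thesis by (simp add: C_def)
qed

lemma one_le_sum_bad_cycle_weight:
  assumes "\<sigma> permutes {1..n}" "\<sigma> \<notin> P_xi n \<xi>" and \<xi>: "\<xi> \<ge> 2"
  shows "1 \<le> (\<Sum>k\<in>{1..n}. bad_cycle_weight \<xi> k
                  * real (perm_cycle_count {1..n} \<sigma> k * (perm_cycle_count {1..n} \<sigma> k - 1)))"
proof -
  let ?c = "perm_cycle_count {1..n} \<sigma>"
  have "\<xi> \<ge> 1" using \<xi> by simp
  then obtain k where k: "k \<in> {1..n}" "?c k \<ge> 2" "\<xi> < real k \<or> \<xi> < real (?c k)"
    by (rule not_in_P_xi_imp_bad_cycle_count[OF assms(1,2)])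
  have "1 \<le> bad_cycle_weight \<xi> k * real (?c k * (?c k - 1))"
    by (rule one_le_bad_cycle_weight[OF \<xi> k(2,3)])
  also have "\<dots> \<le> (\<Sum>k\<in>{1..n}. bad_cycle_weight \<xi> k * real (?c k * (?c k - 1)))"
    by (rule member_le_sum[OF k(1)]) (simp_all add: bad_cycle_weight_def)
  finally show ?thesis .
qed

lemma sum_permutes_cycle_count_pairs_le_cycle_pair_bound:
  assumes "\<theta> > 0" "k \<ge> 1"
  shows "(\<Sum>\<sigma> | \<sigma> permutes {1..n}. \<theta> ^ card (perm_cycles {1..n} \<sigma>)
            * real (perm_cycle_count {1..n} \<sigma> k * (perm_cycle_count {1..n} \<sigma> k - 1)))
         \<le> cycle_pair_bound \<theta> n k * pochhammer \<theta> n"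
  using sum_permutes_cycle_count_pairs_le[of "{1..n}" \<theta> k] assms pochhammer_pos[OF assms(1), of n]
  by (simp add: cycle_pair_bound_def)

lemma ewens_prob_not_P_xi_le:
  assumes \<theta>: "\<theta> > 0" and \<xi>: "\<xi> \<ge> 2"
  shows "ewens_prob \<theta> n {\<sigma>. \<sigma> permutes {1..n} \<and> \<sigma> \<notin> P_xi n \<xi>}
           \<le> 3 * (4 * \<theta> ^ 2 + 8 * \<theta> * (\<theta> + 1)) / \<xi>"
proof -
  define PS where "PS = {\<sigma>. \<sigma> permutes {1..n}}"
  define bad where "bad = {\<sigma>. \<sigma> permutes {1..n} \<and> \<sigma> \<notin> P_xi n \<xi>}"
  define W where "W \<sigma> = \<theta> ^ card (perm_cycles {1..n} \<sigma>)" for \<sigma>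
  define M where "M \<sigma> k = real (perm_cycle_count {1..n} \<sigma> k * (perm_cycle_count {1..n} \<sigma> k - 1))"
    for \<sigma> k
  define F where "F \<sigma> = (\<Sum>k\<in>{1..n}. bad_cycle_weight \<xi> k * M \<sigma> k)" for \<sigma>
  have W: "W \<sigma> \<ge> 0" for \<sigma> using \<theta> by (simp add: W_def)
  have F: "F \<sigma> \<ge> 0" for \<sigma> by (auto simp: F_def M_def bad_cycle_weight_def intro!: sum_nonneg)
  have F_bad: "1 \<le> F \<sigma>" if "\<sigma> \<in> bad" for \<sigma>
    using one_le_sum_bad_cycle_weight[OF _ _ \<xi>] that by (simp add: F_def M_def bad_def)
  have "(\<Sum>\<sigma>\<in>PS \<inter> bad. W \<sigma>) \<le> (\<Sum>\<sigma>\<in>PS \<inter> bad. W \<sigma> * F \<sigma>)"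
    using mult_left_mono[OF F_bad W] by (intro sum_mono) simp
  also have "\<dots> \<le> (\<Sum>\<sigma>\<in>PS. W \<sigma> * F \<sigma>)"
    using W F by (intro sum_mono2) (auto simp: PS_def finite_permutations)
  also have "\<dots> = (\<Sum>k\<in>{1..n}. bad_cycle_weight \<xi> k * (\<Sum>\<sigma>\<in>PS. W \<sigma> * M \<sigma> k))"
    unfolding F_def sum_distrib_left by (subst sum.swap) (simp add: mult_ac)
  also have "\<dots> \<le> (\<Sum>k\<in>{1..n}. bad_cycle_weight \<xi> k * (cycle_pair_bound \<theta> n k * pochhammer \<theta> n))"
    using sum_permutes_cycle_count_pairs_le_cycle_pair_bound[OF \<theta>]
    by (intro sum_mono mult_left_mono) (simp_all add: PS_def W_def M_def bad_cycle_weight_def)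
  also have "\<dots> = (\<Sum>k\<in>{1..n}. bad_cycle_weight \<xi> k * cycle_pair_bound \<theta> n k) * pochhammer \<theta> n"
    by (simp add: sum_distrib_right mult.assoc)
  finally have "(\<Sum>\<sigma>\<in>PS \<inter> bad. W \<sigma>) / pochhammer \<theta> n
      \<le> (\<Sum>k\<in>{1..n}. bad_cycle_weight \<xi> k * cycle_pair_bound \<theta> n k)"
    by (simp add: pos_divide_le_eq[OF pochhammer_pos[OF \<theta>]])
  also note sum_bad_cycle_weight_cycle_pair_bound_le[OF \<theta> \<xi>]
  finally show ?thesis
    by (simp add: ewens_prob_def PS_def bad_def W_def num_cycles_def cycles_of_eq_perm_cycles)
qed

lemma ewens_prob_nonneg: "\<theta> > 0 \<Longrightarrow> ewens_prob \<theta> n A \<ge> 0"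
  by (simp add: ewens_prob_def pochhammer_pos sum_nonneg less_imp_le)

theorem lemma4p2:
  fixes \<theta> :: real and \<xi> :: "nat \<Rightarrow> real"
  assumes "\<theta> > 0"
    and "\<And>n. \<xi> n > 0"
    and "filterlim \<xi> at_top sequentially"
  shows "(\<lambda>n. ewens_prob \<theta> n {\<sigma>. \<sigma> permutes {1..n} \<and> \<sigma> \<notin> P_xi n (\<xi> n)})
           \<in> O(\<lambda>n. 1 / \<xi> n)"
proof (rule bigoI)
  define C where "C = 3 * (4 * \<theta> ^ 2 + 8 * \<theta> * (\<theta> + 1))"
  have "eventually (\<lambda>n. 2 \<le> \<xi> n) sequentially"
    using assms(3) by (simp add: filterlim_at_top)
  then show "eventually (\<lambda>n. norm (ewens_prob \<theta> n {\<sigma>. \<sigma> permutes {1..n} \<and> \<sigma> \<notin> P_xi n (\<xi> n)})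
      \<le> C * norm (1 / \<xi> n)) sequentially"
  proof eventually_elim
    case (elim n)
    then show ?case
      using ewens_prob_nonneg[OF assms(1)] ewens_prob_not_P_xi_le[OF assms(1) elim]
      by (simp add: C_def)
  qed
qed

end
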